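(* Let $X$ be a compactum, let $n\geq2$, and let $f:X\to X$ be a function. Consider the statements: (1) $f$ is two-sided transitive; (2) $F_n(f)$ is two-sided transitive; (3) $SF_n(f)$ is two-sided transitive. Then (2) and (3) are equivalent, and (2) implies (1).
   Context: A compactum is a nondegenerate compact, perfect, Hausdorff topological space. $F_n(X)$ is the set of nonempty subsets of $X$ with at most $n$ points, with the Vietoris topology; $F_1(X)=\{\{x\}:x\in X\}$; $F_n(f)(A)=f(A)$. $SF_n(X)=F_n(X)/F_1(X)$ is the quotient collapsing $F_1(X)$ to a point, $q$ the quotient map, $F_X=q(F_1(X))$, and $SF_n(f)(\chi)=q(F_n(f)(q^{-1}(\chi)))$ for $\chi\neq F_X$, $SF_n(f)(F_X)=F_X$. A function $g:Z\to Z$ is two-sided transitive if $g$ is a homeomorphism and there is $z\in Z$ such that $\{g^k(z):k\in\mathbb{Z}\}$ is dense in $Z$. *)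

theory Defs
  imports "HOL-Analysis.Analysis"
begin

definition compactum :: "'a topology \<Rightarrow> bool" where
  "compactum X \<longleftrightarrow> compact_space X \<and> Hausdorff_space X
     \<and> (\<forall>x\<in>topspace X. \<not> openin X {x})
     \<and> (\<exists>x y. x \<in> topspace X \<and> y \<in> topspace X \<and> x \<noteq> y)"

definition Fn_set :: "nat \<Rightarrow> 'a topology \<Rightarrow> 'a set set" where
  "Fn_set n X = {A. A \<subseteq> topspace X \<and> A \<noteq> {} \<and> finite A \<and> card A \<le> n}"

definition F1_set :: "'a topology \<Rightarrow> 'a set set" where
  "F1_set X = {{x} | x. x \<in> topspace X}"

definition Fn_top :: "nat \<Rightarrow> 'a topology \<Rightarrow> 'a set topology" where
  "Fn_top n X = subtopology
     (topology_generated_by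
        ({{A \<in> Fn_set n X. A \<subseteq> U} | U. openin X U}
         \<union> {{A \<in> Fn_set n X. A \<inter> U \<noteq> {}} | U. openin X U}))
     (Fn_set n X)"

definition Fn_map :: "('a \<Rightarrow> 'a) \<Rightarrow> 'a set \<Rightarrow> 'a set" where
  "Fn_map f A = f ` A"

text \<open>The quotient map q : F_n(X) \<rightarrow> SF_n(X), points of SF_n(X) being the
  equivalence classes (F_1(X) is one class, every other point is its own class).\<close>
definition q_map :: "'a topology \<Rightarrow> 'a set \<Rightarrow> 'a set set" where
  "q_map X A = (if A \<in> F1_set X then F1_set X else {A})"

definition SFn_top :: "nat \<Rightarrow> 'a topology \<Rightarrow> 'a set set topology" where
  "SFn_top n X = topology (\<lambda>V. V \<subseteq> q_map X ` Fn_set n X \<and>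
      openin (Fn_top n X) {A \<in> Fn_set n X. q_map X A \<in> V})"

text \<open>SF_n(f)(\<chi>) = q(F_n(f)(q^{-1}(\<chi>))) for \<chi> \<noteq> F_X, and SF_n(f)(F_X) = F_X.
  For \<chi> \<noteq> F_X, q^{-1}(\<chi>) is the single point the_elem \<chi>.\<close>
definition SFn_map :: "'a topology \<Rightarrow> ('a \<Rightarrow> 'a) \<Rightarrow> 'a set set \<Rightarrow> 'a set set" where
  "SFn_map X f c = (if c = F1_set X then F1_set X
                     else q_map X (Fn_map f (the_elem c)))"

definition two_sided_transitive :: "'b topology \<Rightarrow> ('b \<Rightarrow> 'b) \<Rightarrow> bool" where
  "two_sided_transitive Z g \<longleftrightarrow> homeomorphic_map Z Z g \<and>
     (\<exists>z\<in>topspace Z.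
        Z closure_of ({(g ^^ k) z | k. True} \<union> {(inv_into (topspace Z) g ^^ k) z | k. True})
          = topspace Z)"


lemma istopology_SFn:
  "istopology (\<lambda>V. V \<subseteq> q_map X ` Fn_set n X \<and>
      openin (Fn_top n X) {A \<in> Fn_set n X. q_map X A \<in> V})"
proof -
  show ?thesis
    unfolding istopology_def
  proof (rule conjI; intro allI impI)
    fix S T assume a: "S \<subseteq> q_map X ` Fn_set n X \<and> openin (Fn_top n X) {A \<in> Fn_set n X. q_map X A \<in> S}"
      "T \<subseteq> q_map X ` Fn_set n X \<and> openin (Fn_top n X) {A \<in> Fn_set n X. q_map X A \<in> T}"
    have "{A \<in> Fn_set n X. q_map X A \<in> S \<inter> T} = {A \<in> Fn_set n X. q_map X A \<in> S} \<inter> {A \<in> Fn_set n X. q_map X A \<in> T}" by auto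
    then show "S \<inter> T \<subseteq> q_map X ` Fn_set n X \<and> openin (Fn_top n X) {A \<in> Fn_set n X. q_map X A \<in> S \<inter> T}"
      using a by auto
  next
    fix K assume a: "\<forall>S\<in>K. S \<subseteq> q_map X ` Fn_set n X \<and> openin (Fn_top n X) {A \<in> Fn_set n X. q_map X A \<in> S}"
    have "{A \<in> Fn_set n X. q_map X A \<in> \<Union>K} = (\<Union>S\<in>K. {A \<in> Fn_set n X. q_map X A \<in> S})" by auto
    then show "\<Union>K \<subseteq> q_map X ` Fn_set n X \<and> openin (Fn_top n X) {A \<in> Fn_set n X. q_map X A \<in> \<Union>K}"
      using a by auto
  qed
qed

end

theory Submission
  imports Defs
begin

text \<open>
  Both F_n(f) and SF_n(f) can be homeomorphisms only when f is one: f is recovered from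
  F_n(f) along the embedding x \<mapsto> {x}, and from SF_n(f) along the maps y \<mapsto> q{x, y};
  compactness turns the resulting continuous bijection into a homeomorphism.
  For a homeomorphism f the quotient map q semi-conjugates F_n(f) to SF_n(f), so dense orbits
  descend. Conversely, q is injective and open on the open set of non-singletons, which meets
  every nonempty open subset of F_n(X) because X is perfect; as F_X is a fixed point
  whose orbit is not dense, a dense orbit of SF_n(f) lifts to one of F_n(f).
  Finally, if the orbit of A is dense, the open sets {B. B \<subseteq> U} show that the orbit of
  any a \<in> A is dense in X.
\<close>

definition Vietoris_subbasis :: "nat \<Rightarrow> 'a topology \<Rightarrow> 'a set set set" where
  "Vietoris_subbasis n X =
     {{A \<in> Fn_set n X. A \<subseteq> U} | U. openin X U} \<union> {{A \<in> Fn_set n X. A \<inter> U \<noteq> {}} | U. openin X U}"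

lemma Fn_top_eq_Vietoris_subbasis:
  "Fn_top n X = subtopology (topology_generated_by (Vietoris_subbasis n X)) (Fn_set n X)"
  by (simp add: Fn_top_def Vietoris_subbasis_def)

lemma Fn_set_in_Vietoris_subbasis: "Fn_set n X \<in> Vietoris_subbasis n X"
  unfolding Vietoris_subbasis_def
  by (intro UnI1 CollectI exI[of _ "topspace X"]) (auto simp: Fn_set_def)

lemma topspace_Fn_top [simp]: "topspace (Fn_top n X) = Fn_set n X"
  unfolding Fn_top_eq_Vietoris_subbasis topspace_subtopology topology_generated_by_topspace
  by (intro Int_absorb1 Union_upper Fn_set_in_Vietoris_subbasis)

lemma openin_Fn_top_subset: "openin X U \<Longrightarrow> openin (Fn_top n X) {A \<in> Fn_set n X. A \<subseteq> U}"
  unfolding Fn_top_def openin_subtopology openin_topology_generated_by_iff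
  by (rule exI[of _ "{A \<in> Fn_set n X. A \<subseteq> U}"]) (auto intro!: generate_topology_on.Basis)

lemma openin_Fn_top_meets: "openin X U \<Longrightarrow> openin (Fn_top n X) {A \<in> Fn_set n X. A \<inter> U \<noteq> {}}"
  unfolding Fn_top_def openin_subtopology openin_topology_generated_by_iff
  by (rule exI[of _ "{A \<in> Fn_set n X. A \<inter> U \<noteq> {}}"]) (auto intro!: generate_topology_on.Basis)

lemma continuous_map_into_Fn_top:
  assumes into: "\<And>y. y \<in> topspace Y \<Longrightarrow> g y \<in> Fn_set n X"
    and subset: "\<And>U. openin X U \<Longrightarrow> openin Y {y \<in> topspace Y. g y \<subseteq> U}"
    and meets: "\<And>U. openin X U \<Longrightarrow> openin Y {y \<in> topspace Y. g y \<inter> U \<noteq> {}}"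
  shows "continuous_map Y (Fn_top n X) g"
proof -
  have "openin Y (g -` V \<inter> topspace Y)" if "V \<in> Vietoris_subbasis n X" for V
  proof -
    from that consider U where "openin X U" "V = {A \<in> Fn_set n X. A \<subseteq> U}"
      | U where "openin X U" "V = {A \<in> Fn_set n X. A \<inter> U \<noteq> {}}"
      unfolding Vietoris_subbasis_def by blast
    then show ?thesis
    proof cases
      case 1
      then have "g -` V \<inter> topspace Y = {y \<in> topspace Y. g y \<subseteq> U}"
        using into by auto
      with 1 subset show ?thesis
        by simp
    next
      case 2
      then have "g -` V \<inter> topspace Y = {y \<in> topspace Y. g y \<inter> U \<noteq> {}}"
        using into by auto
      with 2 meets show ?thesis
        by simp
    qed
  qed
  moreover have "g ` topspace Y \<subseteq> \<Union> (Vietoris_subbasis n X)"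
    using into Fn_set_in_Vietoris_subbasis by blast
  ultimately have "continuous_map Y (topology_generated_by (Vietoris_subbasis n X)) g"
    by (rule continuous_on_generated_topo)
  with into show ?thesis
    unfolding Fn_top_eq_Vietoris_subbasis continuous_map_in_subtopology by blast
qed

lemma openin_SFn_top:
  "openin (SFn_top n X) V \<longleftrightarrow>
     V \<subseteq> q_map X ` Fn_set n X \<and> openin (Fn_top n X) {A \<in> Fn_set n X. q_map X A \<in> V}"
  unfolding SFn_top_def topology_inverse'[OF istopology_SFn] by (rule refl)

lemma topspace_SFn_top [simp]: "topspace (SFn_top n X) = q_map X ` Fn_set n X"
proof (rule antisym)
  show "topspace (SFn_top n X) \<subseteq> q_map X ` Fn_set n X"
    using openin_topspace[of "SFn_top n X"] by (simp only: openin_SFn_top)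
  have "{A \<in> Fn_set n X. q_map X A \<in> q_map X ` Fn_set n X} = Fn_set n X"
    by blast
  then have "openin (SFn_top n X) (q_map X ` Fn_set n X)"
    unfolding openin_SFn_top using openin_topspace[of "Fn_top n X"] by simp
  then show "q_map X ` Fn_set n X \<subseteq> topspace (SFn_top n X)"
    by (rule openin_subset)
qed

lemma quotient_map_q_map: "quotient_map (Fn_top n X) (SFn_top n X) (q_map X)"
  unfolding quotient_map_def by (simp add: openin_SFn_top)

lemma q_map_eq_F1_iff: "q_map X A = F1_set X \<longleftrightarrow> A \<in> F1_set X"
  by (auto simp: q_map_def)

lemma q_map_eq_iff: "B \<notin> F1_set X \<Longrightarrow> q_map X A = q_map X B \<longleftrightarrow> A = B"
  by (auto simp: q_map_def)

lemma q_map_in_image_iff: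
  assumes "F1_set X \<subseteq> N \<or> F1_set X \<inter> N = {}"
  shows "q_map X A \<in> q_map X ` N \<longleftrightarrow> A \<in> N"
proof (cases "A \<in> F1_set X")
  case True
  then show ?thesis
    using assms by (auto simp: q_map_def)
next
  case False
  then have "q_map X B = q_map X A \<longleftrightarrow> B = A" for B
    by (rule q_map_eq_iff)
  then show ?thesis
    by (metis image_iff)
qed

lemma openin_SFn_top_q_image:
  assumes "openin (Fn_top n X) N" and "F1_set X \<subseteq> N \<or> F1_set X \<inter> N = {}"
  shows "openin (SFn_top n X) (q_map X ` N)"
proof -
  have "N \<subseteq> Fn_set n X"
    using openin_subset[OF assms(1)] by simp
  then have "{A \<in> Fn_set n X. q_map X A \<in> q_map X ` N} = N"
    using q_map_in_image_iff[OF assms(2)] by blast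
  with assms(1) \<open>N \<subseteq> Fn_set n X\<close> show ?thesis
    unfolding openin_SFn_top by auto
qed

lemma singleton_in_Fn_set: "n \<ge> 1 \<Longrightarrow> x \<in> topspace X \<Longrightarrow> {x} \<in> Fn_set n X"
  by (auto simp: Fn_set_def)

lemma doubleton_in_Fn_set:
  "n \<ge> 2 \<Longrightarrow> x \<in> topspace X \<Longrightarrow> y \<in> topspace X \<Longrightarrow> {x, y} \<in> Fn_set n X"
  by (auto simp: Fn_set_def card_insert_if)

lemma doubleton_notin_F1_set: "x \<noteq> y \<Longrightarrow> {x, y} \<notin> F1_set X"
  by (auto simp: F1_set_def doubleton_eq_iff)

lemma Fn_map_in_Fn_set:
  assumes "f \<in> topspace X \<rightarrow> topspace Y" and "A \<in> Fn_set n X"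
  shows "Fn_map f A \<in> Fn_set n Y"
proof -
  have "card (f ` A) \<le> card A"
    using assms(2) by (intro card_image_le) (auto simp: Fn_set_def)
  with assms show ?thesis
    by (auto simp: Fn_set_def Fn_map_def)
qed

lemma funpow_Fn_map: "(Fn_map f ^^ k) A = (f ^^ k) ` A"
  by (induction k) (auto simp: Fn_map_def image_comp)

lemma SFn_map_q_map:
  assumes "f \<in> topspace X \<rightarrow> topspace X"
  shows "SFn_map X f (q_map X A) = q_map X (Fn_map f A)"
proof (cases "A \<in> F1_set X")
  case True
  then have "Fn_map f A \<in> F1_set X"
    using assms by (auto simp: F1_set_def Fn_map_def)
  with True show ?thesis
    by (simp add: q_map_def SFn_map_def)
next
  case False
  then have "{A} \<noteq> F1_set X"
    by blast
  with False show ?thesis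
    by (simp add: q_map_def SFn_map_def)
qed

lemma continuous_map_Fn_map:
  assumes "continuous_map X Y f"
  shows "continuous_map (Fn_top n X) (Fn_top n Y) (Fn_map f)"
proof (rule continuous_map_into_Fn_top)
  show "Fn_map f A \<in> Fn_set n Y" if "A \<in> topspace (Fn_top n X)" for A
    using that assms Fn_map_in_Fn_set[of f X Y] by (simp add: continuous_map_def)
  fix U
  assume "openin Y U"
  then have P: "openin X {x \<in> topspace X. f x \<in> U}"
    using assms by (rule openin_continuous_map_preimage[rotated])
  have "{A \<in> topspace (Fn_top n X). Fn_map f A \<subseteq> U}
        = {A \<in> Fn_set n X. A \<subseteq> {x \<in> topspace X. f x \<in> U}}"
    by (auto simp: Fn_map_def Fn_set_def)
  with openin_Fn_top_subset[OF P]
  show "openin (Fn_top n X) {A \<in> topspace (Fn_top n X). Fn_map f A \<subseteq> U}"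
    by simp
  have "{A \<in> topspace (Fn_top n X). Fn_map f A \<inter> U \<noteq> {}}
        = {A \<in> Fn_set n X. A \<inter> {x \<in> topspace X. f x \<in> U} \<noteq> {}}"
    by (auto simp: Fn_map_def Fn_set_def)
  with openin_Fn_top_meets[OF P]
  show "openin (Fn_top n X) {A \<in> topspace (Fn_top n X). Fn_map f A \<inter> U \<noteq> {}}"
    by simp
qed

lemma continuous_map_singleton_Fn_top:
  assumes "n \<ge> 1"
  shows "continuous_map X (Fn_top n X) (\<lambda>y. {y})"
proof (rule continuous_map_into_Fn_top)
  show "{y} \<in> Fn_set n X" if "y \<in> topspace X" for y
    using assms that by (rule singleton_in_Fn_set)
  fix U
  assume U: "openin X U"
  have "{y \<in> topspace X. {y} \<subseteq> U} = U" "{y \<in> topspace X. {y} \<inter> U \<noteq> {}} = U"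
    using openin_subset[OF U] by auto
  with U show "openin X {y \<in> topspace X. {y} \<subseteq> U}" "openin X {y \<in> topspace X. {y} \<inter> U \<noteq> {}}"
    by simp_all
qed

lemma continuous_map_doubleton_Fn_top:
  assumes "n \<ge> 2" and x: "x \<in> topspace X"
  shows "continuous_map X (Fn_top n X) (\<lambda>y. {x, y})"
proof (rule continuous_map_into_Fn_top)
  show "{x, y} \<in> Fn_set n X" if "y \<in> topspace X" for y
    using assms that by (rule doubleton_in_Fn_set)
  fix U
  assume U: "openin X U"
  show "openin X {y \<in> topspace X. {x, y} \<subseteq> U}"
  proof (cases "x \<in> U")
    case True
    then have "{y \<in> topspace X. {x, y} \<subseteq> U} = U"
      using openin_subset[OF U] by auto
    with U show ?thesis
      by simp
  qed simp
  show "openin X {y \<in> topspace X. {x, y} \<inter> U \<noteq> {}}"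
  proof (cases "x \<in> U")
    case False
    then have "{y \<in> topspace X. {x, y} \<inter> U \<noteq> {}} = U"
      using openin_subset[OF U] by auto
    with U show ?thesis
      by simp
  qed simp
qed

lemma continuous_map_SFn_map:
  assumes "continuous_map X X f"
  shows "continuous_map (SFn_top n X) (SFn_top n X) (SFn_map X f)"
proof (rule continuous_compose_quotient_map[OF quotient_map_q_map])
  have "f \<in> topspace X \<rightarrow> topspace X"
    using assms by (simp add: continuous_map_def)
  then have "q_map X (Fn_map f A) = (SFn_map X f \<circ> q_map X) A" for A
    by (simp add: SFn_map_q_map)
  moreover have "continuous_map (Fn_top n X) (SFn_top n X) (q_map X \<circ> Fn_map f)"
    using continuous_map_Fn_map[OF assms] quotient_imp_continuous_map[OF quotient_map_q_map]
    by (rule continuous_map_compose)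
  ultimately show "continuous_map (Fn_top n X) (SFn_top n X) (SFn_map X f \<circ> q_map X)"
    by (simp add: comp_def)
qed

lemma homeomorphic_maps_Fn_map:
  assumes "homeomorphic_maps X Y f g"
  shows "homeomorphic_maps (Fn_top n X) (Fn_top n Y) (Fn_map f) (Fn_map g)"
proof -
  have "Fn_map g (Fn_map f A) = A" if "A \<in> Fn_set n X" for A
    using that assms by (force simp: Fn_set_def Fn_map_def homeomorphic_maps_def image_comp)
  moreover have "Fn_map f (Fn_map g B) = B" if "B \<in> Fn_set n Y" for B
    using that assms by (force simp: Fn_set_def Fn_map_def homeomorphic_maps_def image_comp)
  ultimately show ?thesis
    using assms continuous_map_Fn_map by (auto simp: homeomorphic_maps_def)
qed

lemma homeomorphic_maps_SFn_map:
  assumes "homeomorphic_maps X X f g"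
  shows "homeomorphic_maps (SFn_top n X) (SFn_top n X) (SFn_map X f) (SFn_map X g)"
proof -
  have f: "f \<in> topspace X \<rightarrow> topspace X" and g: "g \<in> topspace X \<rightarrow> topspace X"
    using assms by (auto simp: homeomorphic_maps_def continuous_map_def)
  have "homeomorphic_maps (Fn_top n X) (Fn_top n X) (Fn_map f) (Fn_map g)"
    using assms by (rule homeomorphic_maps_Fn_map)
  then have "\<forall>A \<in> Fn_set n X. Fn_map g (Fn_map f A) = A \<and> Fn_map f (Fn_map g A) = A"
    by (simp add: homeomorphic_maps_def)
  then have "\<forall>C \<in> topspace (SFn_top n X).
               SFn_map X g (SFn_map X f C) = C \<and> SFn_map X f (SFn_map X g C) = C"
    by (simp add: SFn_map_q_map[OF f] SFn_map_q_map[OF g])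
  with assms show ?thesis
    by (auto simp: homeomorphic_maps_def intro: continuous_map_SFn_map)
qed

lemma openin_Fn_top_non_singletons:
  assumes "Hausdorff_space X"
  shows "openin (Fn_top n X) (Fn_set n X - F1_set X)"
proof (subst openin_subopen, intro ballI)
  fix B
  assume B: "B \<in> Fn_set n X - F1_set X"
  then obtain a where "a \<in> B"
    by (auto simp: Fn_set_def)
  moreover have "B \<noteq> {a}"
    using B \<open>a \<in> B\<close> by (auto simp: Fn_set_def F1_set_def)
  ultimately obtain b where ab: "a \<in> B" "b \<in> B" "a \<noteq> b"
    by blast
  moreover have "a \<in> topspace X" "b \<in> topspace X"
    using ab B by (auto simp: Fn_set_def)
  ultimately obtain U V where UV: "openin X U" "openin X V" "a \<in> U" "b \<in> V" "disjnt U V"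
    using assms unfolding Hausdorff_space_def by metis
  let ?T = "{C \<in> Fn_set n X. C \<inter> U \<noteq> {}} \<inter> {C \<in> Fn_set n X. C \<inter> V \<noteq> {}}"
  have "openin (Fn_top n X) ?T"
    using openin_Fn_top_meets[OF UV(1)] openin_Fn_top_meets[OF UV(2)] by blast
  moreover have "B \<in> ?T"
    using B ab UV by auto
  moreover have "?T \<subseteq> Fn_set n X - F1_set X"
    using UV(5) by (auto simp: F1_set_def disjnt_def)
  ultimately show "\<exists>T. openin (Fn_top n X) T \<and> B \<in> T \<and> T \<subseteq> Fn_set n X - F1_set X"
    by blast
qed

lemma openin_Fn_top_meets_non_singletons:
  assumes perfect: "\<forall>x \<in> topspace X. \<not> openin X {x}" and "n \<ge> 2"
    and G: "openin (Fn_top n X) G" "G \<noteq> {}"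
  shows "G - F1_set X \<noteq> {}"
proof
  assume G_F1: "G - F1_set X = {}"
  obtain x where x: "x \<in> topspace X" "{x} \<in> G"
    using G G_F1 by (auto simp: F1_set_def)
  let ?W = "{y \<in> topspace X. {x, y} \<in> G}"
  have W: "openin X ?W"
    using openin_continuous_map_preimage[OF continuous_map_doubleton_Fn_top[OF \<open>n \<ge> 2\<close> x(1)] G(1)] .
  moreover have "x \<in> ?W"
    using x by simp
  moreover have "?W \<noteq> {x}"
    using perfect x(1) W by auto
  ultimately obtain y where "y \<in> ?W" "y \<noteq> x"
    by blast
  with G_F1 show False
    using doubleton_notin_F1_set[of x y X] by blast
qed

lemma openin_SFn_top_inside_or_avoiding:
  assumes "t1_space X" and "n \<ge> 1" and U: "openin X U" and "p \<in> U"
  shows "F1_set X \<subseteq> {B \<in> Fn_set n X. B \<subseteq> U \<or> p \<notin> B}"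
    and "openin (SFn_top n X) (q_map X ` {B \<in> Fn_set n X. B \<subseteq> U \<or> p \<notin> B})"
proof -
  show F1: "F1_set X \<subseteq> {B \<in> Fn_set n X. B \<subseteq> U \<or> p \<notin> B}"
    using \<open>p \<in> U\<close> singleton_in_Fn_set[OF \<open>n \<ge> 1\<close>] by (auto simp: F1_set_def)
  have "closedin X {p}"
    using assms openin_subset[OF U] by (intro closedin_t1_singleton) auto
  then have "openin X (topspace X - {p})"
    by (rule openin_diff[OF openin_topspace])
  with U have "openin (Fn_top n X) ({B \<in> Fn_set n X. B \<subseteq> U} \<union> {B \<in> Fn_set n X. B \<subseteq> topspace X - {p}})"
    by (intro openin_Un openin_Fn_top_subset)
  moreover have "{B \<in> Fn_set n X. B \<subseteq> U} \<union> {B \<in> Fn_set n X. B \<subseteq> topspace X - {p}}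
                 = {B \<in> Fn_set n X. B \<subseteq> U \<or> p \<notin> B}"
    by (auto simp: Fn_set_def)
  ultimately show "openin (SFn_top n X) (q_map X ` {B \<in> Fn_set n X. B \<subseteq> U \<or> p \<notin> B})"
    using F1 by (intro openin_SFn_top_q_image) simp_all
qed

lemma continuous_map_of_Fn_map:
  assumes "n \<ge> 1" and f: "f \<in> topspace X \<rightarrow> topspace X"
    and cont: "continuous_map (Fn_top n X) (Fn_top n X) (Fn_map f)"
  shows "continuous_map X X f"
  unfolding continuous_map_def
proof (intro conjI allI impI)
  fix U
  assume "openin X U"
  have "continuous_map X (Fn_top n X) (Fn_map f \<circ> (\<lambda>x. {x}))"
    using continuous_map_singleton_Fn_top[OF \<open>n \<ge> 1\<close>] cont by (rule continuous_map_compose)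
  then have "openin X {x \<in> topspace X. (Fn_map f \<circ> (\<lambda>x. {x})) x \<in> {A \<in> Fn_set n X. A \<subseteq> U}}"
    using openin_Fn_top_subset[OF \<open>openin X U\<close>] by (rule openin_continuous_map_preimage)
  moreover have "{f x} \<in> Fn_set n X" if "x \<in> topspace X" for x
    using f that by (intro singleton_in_Fn_set[OF \<open>n \<ge> 1\<close>]) auto
  then have "{x \<in> topspace X. f x \<in> U}
          = {x \<in> topspace X. (Fn_map f \<circ> (\<lambda>x. {x})) x \<in> {A \<in> Fn_set n X. A \<subseteq> U}}"
    by (auto simp: Fn_map_def)
  ultimately show "openin X {x \<in> topspace X. f x \<in> U}"
    by simp
qed (rule f)

lemma continuous_map_of_SFn_map:
  assumes "Hausdorff_space X" and "n \<ge> 2"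
    and f: "f \<in> topspace X \<rightarrow> topspace X"
    and cont: "continuous_map (SFn_top n X) (SFn_top n X) (SFn_map X f)"
  shows "continuous_map X X f"
  unfolding continuous_map_def
proof (intro conjI allI impI)
  fix U
  assume U: "openin X U"
  show "openin X {x \<in> topspace X. f x \<in> U}"
  proof (cases "{x \<in> topspace X. f x \<in> U} = {}")
    case False
    then obtain x where x: "x \<in> topspace X" "f x \<in> U"
      by blast
    define W where "W = {B \<in> Fn_set n X. B \<subseteq> U \<or> f x \<notin> B}"
    have "t1_space X" "n \<ge> 1"
      using assms(1,2) by (simp_all add: Hausdorff_imp_t1_space)
    note W = openin_SFn_top_inside_or_avoiding[OF this U x(2), folded W_def]
    have "continuous_map X (SFn_top n X) (\<lambda>y. SFn_map X f (q_map X {x, y}))"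
      using continuous_map_compose[OF continuous_map_compose[OF
          continuous_map_doubleton_Fn_top[OF \<open>n \<ge> 2\<close> x(1)]
          quotient_imp_continuous_map[OF quotient_map_q_map]] cont]
      by (simp add: comp_def)
    then have "openin X {y \<in> topspace X. SFn_map X f (q_map X {x, y}) \<in> q_map X ` W}"
      using W(2) by (rule openin_continuous_map_preimage)
    moreover have "SFn_map X f (q_map X {x, y}) \<in> q_map X ` W \<longleftrightarrow> f y \<in> U"
      if "y \<in> topspace X" for y
    proof -
      have "{f x, f y} \<in> Fn_set n X"
        using x(1) that f by (intro doubleton_in_Fn_set[OF \<open>n \<ge> 2\<close>]) auto
      then have "{f x, f y} \<in> W \<longleftrightarrow> f y \<in> U"
        using x(2) by (auto simp: W_def)
      moreover have "q_map X {f x, f y} \<in> q_map X ` W \<longleftrightarrow> {f x, f y} \<in> W"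
        using W(1) by (intro q_map_in_image_iff) simp
      ultimately show ?thesis
        by (simp add: SFn_map_q_map[OF f] Fn_map_def)
    qed
    then have "{y \<in> topspace X. SFn_map X f (q_map X {x, y}) \<in> q_map X ` W}
               = {y \<in> topspace X. f y \<in> U}"
      by auto
    ultimately show ?thesis
      by simp
  next
    case True
    show ?thesis
      unfolding True by (rule openin_empty)
  qed
qed (rule f)

lemma inj_on_of_Fn_map:
  assumes "n \<ge> 1" and inj: "inj_on (Fn_map f) (Fn_set n X)"
  shows "inj_on f (topspace X)"
proof (rule inj_onI)
  fix x y
  assume "x \<in> topspace X" "y \<in> topspace X" "f x = f y"
  then have "{x} \<in> Fn_set n X" "{y} \<in> Fn_set n X" "Fn_map f {x} = Fn_map f {y}"
    using \<open>n \<ge> 1\<close> by (simp_all add: singleton_in_Fn_set Fn_map_def)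
  then show "x = y"
    using inj_onD[OF inj] by blast
qed

lemma image_eq_of_Fn_map:
  assumes "n \<ge> 1" and f: "f \<in> topspace X \<rightarrow> topspace X"
    and surj: "Fn_map f ` Fn_set n X = Fn_set n X"
  shows "f ` topspace X = topspace X"
proof
  show "f ` topspace X \<subseteq> topspace X"
    using f by blast
  show "topspace X \<subseteq> f ` topspace X"
  proof
    fix y
    assume "y \<in> topspace X"
    then have "{y} \<in> Fn_map f ` Fn_set n X"
      using surj singleton_in_Fn_set[OF \<open>n \<ge> 1\<close>] by simp
    then obtain B where "B \<in> Fn_set n X" "{y} = f ` B"
      by (auto simp: Fn_map_def)
    then show "y \<in> f ` topspace X"
      by (auto simp: Fn_set_def)
  qed
qed

lemma inj_on_of_SFn_map:
  assumes "n \<ge> 2" and f: "f \<in> topspace X \<rightarrow> topspace X"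
    and inj: "inj_on (SFn_map X f) (q_map X ` Fn_set n X)"
  shows "inj_on f (topspace X)"
proof (rule inj_onI, rule ccontr)
  fix x y
  assume xy: "x \<in> topspace X" "y \<in> topspace X" "f x = f y" "x \<noteq> y"
  have "SFn_map X f (q_map X {x, y}) = SFn_map X f (q_map X {x})"
    using xy(3) by (simp add: SFn_map_q_map[OF f] Fn_map_def)
  moreover have "{x, y} \<in> Fn_set n X" "{x} \<in> Fn_set n X"
    using xy(1,2) \<open>n \<ge> 2\<close> by (auto intro: doubleton_in_Fn_set singleton_in_Fn_set)
  ultimately have "q_map X {x, y} = q_map X {x}"
    using inj_onD[OF inj] by blast
  also have "\<dots> = F1_set X"
    using xy(1) by (subst q_map_eq_F1_iff) (auto simp: F1_set_def)
  finally show False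
    using doubleton_notin_F1_set[OF xy(4)] by (simp add: q_map_eq_F1_iff)
qed

lemma image_eq_of_SFn_map:
  assumes "n \<ge> 2" and f: "f \<in> topspace X \<rightarrow> topspace X"
    and surj: "SFn_map X f ` q_map X ` Fn_set n X = q_map X ` Fn_set n X"
  shows "f ` topspace X = topspace X"
proof
  show "f ` topspace X \<subseteq> topspace X"
    using f by blast
  show "topspace X \<subseteq> f ` topspace X"
  proof
    fix y
    assume y: "y \<in> topspace X"
    show "y \<in> f ` topspace X"
    proof (cases "\<exists>z \<in> topspace X. z \<noteq> y")
      case True
      then obtain z where z: "z \<in> topspace X" "z \<noteq> y"
        by blast
      have "q_map X {y, z} \<in> q_map X ` Fn_set n X"
        using doubleton_in_Fn_set[OF \<open>n \<ge> 2\<close> y z(1)] by (rule imageI)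
      then have "q_map X {y, z} \<in> SFn_map X f ` q_map X ` Fn_set n X"
        by (simp only: surj)
      then obtain A where A: "A \<in> Fn_set n X" "q_map X (Fn_map f A) = q_map X {y, z}"
        unfolding image_image SFn_map_q_map[OF f] by blast
      have "{y, z} \<notin> F1_set X"
        using z(2) by (intro doubleton_notin_F1_set) simp
      then have "Fn_map f A = {y, z}"
        using A(2) q_map_eq_iff by blast
      with A(1) show ?thesis
        by (auto simp: Fn_set_def Fn_map_def)
    next
      case False
      have "f y \<in> topspace X"
        using f y by blast
      with False have "f y = y"
        by blast
      moreover from y have "f y \<in> f ` topspace X"
        by (rule imageI)
      ultimately show ?thesis
        by simp
    qed
  qed
qed

lemma homeomorphic_map_of_Fn_map:
  assumes "compact_space X" and "Hausdorff_space X" and "n \<ge> 1"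
    and f: "f \<in> topspace X \<rightarrow> topspace X"
    and hom: "homeomorphic_map (Fn_top n X) (Fn_top n X) (Fn_map f)"
  shows "homeomorphic_map X X f"
proof (rule continuous_imp_homeomorphic_map)
  show "inj_on f (topspace X)"
    using \<open>n \<ge> 1\<close> by (rule inj_on_of_Fn_map) (use homeomorphic_imp_injective_map[OF hom] in simp)
  show "f ` topspace X = topspace X"
    using \<open>n \<ge> 1\<close> f by (rule image_eq_of_Fn_map) (use homeomorphic_imp_surjective_map[OF hom] in simp)
  show "continuous_map X X f"
    using \<open>n \<ge> 1\<close> f homeomorphic_imp_continuous_map[OF hom] by (rule continuous_map_of_Fn_map)
qed (use assms in auto)

lemma homeomorphic_map_of_SFn_map:
  assumes "compact_space X" and "Hausdorff_space X" and "n \<ge> 2"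
    and f: "f \<in> topspace X \<rightarrow> topspace X"
    and hom: "homeomorphic_map (SFn_top n X) (SFn_top n X) (SFn_map X f)"
  shows "homeomorphic_map X X f"
proof (rule continuous_imp_homeomorphic_map)
  show "inj_on f (topspace X)"
    using \<open>n \<ge> 2\<close> f by (rule inj_on_of_SFn_map) (use homeomorphic_imp_injective_map[OF hom] in simp)
  show "f ` topspace X = topspace X"
    using \<open>n \<ge> 2\<close> f by (rule image_eq_of_SFn_map) (use homeomorphic_imp_surjective_map[OF hom] in simp)
  show "continuous_map X X f"
    using assms(2,3) f homeomorphic_imp_continuous_map[OF hom] by (rule continuous_map_of_SFn_map)
qed (use assms in auto)

text \<open>The second map plays the role of the inverse of the first; unlike the
  \<^const>\<open>inv_into\<close> of \<^const>\<open>two_sided_transitive\<close>, it may be any two-sided inverse.\<close>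

definition two_sided_orbit :: "('b \<Rightarrow> 'b) \<Rightarrow> ('b \<Rightarrow> 'b) \<Rightarrow> 'b \<Rightarrow> 'b set" where
  "two_sided_orbit g h z = range (\<lambda>k. (g ^^ k) z) \<union> range (\<lambda>k. (h ^^ k) z)"

lemma funpow_in_funcset: "f \<in> S \<rightarrow> S \<Longrightarrow> x \<in> S \<Longrightarrow> (f ^^ k) x \<in> S"
  by (induction k) auto

lemma funpow_semiconj:
  assumes "a \<in> S \<rightarrow> S" and "\<And>z. z \<in> S \<Longrightarrow> h (a z) = b (h z)" and "z \<in> S"
  shows "(b ^^ k) (h z) = h ((a ^^ k) z)"
proof (induction k)
  case (Suc k)
  have "(a ^^ k) z \<in> S"
    using assms(1,3) by (rule funpow_in_funcset)
  with Suc show ?case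
    using assms(2) by simp
qed simp

lemma two_sided_orbit_semiconj:
  assumes "a \<in> S \<rightarrow> S" "a' \<in> S \<rightarrow> S"
    and "\<And>z. z \<in> S \<Longrightarrow> h (a z) = b (h z)" "\<And>z. z \<in> S \<Longrightarrow> h (a' z) = b' (h z)"
    and "z \<in> S"
  shows "two_sided_orbit b b' (h z) = h ` two_sided_orbit a a' z"
proof -
  have "(\<lambda>k. (b ^^ k) (h z)) = (\<lambda>k. h ((a ^^ k) z))" "(\<lambda>k. (b' ^^ k) (h z)) = (\<lambda>k. h ((a' ^^ k) z))"
    using funpow_semiconj[of a S h b, OF assms(1,3,5)] funpow_semiconj[of a' S h b', OF assms(2,4,5)]
    by simp_all
  then show ?thesis
    unfolding two_sided_orbit_def image_Un image_image
    by (rule arg_cong2[where f = "\<lambda>A B. range A \<union> range B"])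
qed

lemma two_sided_orbit_fixed_point:
  assumes "a z = z" and "a' z = z"
  shows "two_sided_orbit a a' z = {z}"
proof -
  have "(a ^^ k) z = z" "(a' ^^ k) z = z" for k
    using assms by (induction k) simp_all
  then show ?thesis
    by (simp add: two_sided_orbit_def)
qed

lemma two_sided_transitive_iff_dense_orbit:
  assumes gh: "homeomorphic_maps Z Z g h"
  shows "two_sided_transitive Z g \<longleftrightarrow>
           (\<exists>z \<in> topspace Z. Z closure_of two_sided_orbit g h z = topspace Z)"
proof -
  have hom: "homeomorphic_map Z Z g"
    using gh by (rule homeomorphic_maps_imp_map)
  have h: "h \<in> topspace Z \<rightarrow> topspace Z" and gh_id: "\<And>z. z \<in> topspace Z \<Longrightarrow> g (h z) = z"
    using gh by (auto simp: homeomorphic_maps_def continuous_map_def)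
  have inv: "inv_into (topspace Z) g z = h z" if "z \<in> topspace Z" for z
    using homeomorphic_imp_injective_map[OF hom] h that gh_id[OF that] by (intro inv_into_f_eq) auto
  have "(inv_into (topspace Z) g ^^ k) z = (h ^^ k) z" if "z \<in> topspace Z" for z k
    using funpow_semiconj[of h "topspace Z" id "inv_into (topspace Z) g", OF h _ that] inv by simp
  then have "{(g ^^ k) z | k. True} \<union> {(inv_into (topspace Z) g ^^ k) z | k. True}
               = two_sided_orbit g h z"
    if "z \<in> topspace Z" for z
    using that by (auto simp: two_sided_orbit_def)
  with hom show ?thesis
    unfolding two_sided_transitive_def by simp
qed

lemma dense_two_sided_orbit_image:
  assumes cont: "continuous_map Z W h" and surj: "h ` topspace Z = topspace W"
    and "a \<in> topspace Z \<rightarrow> topspace Z" "a' \<in> topspace Z \<rightarrow> topspace Z"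
    and "\<And>z. z \<in> topspace Z \<Longrightarrow> h (a z) = b (h z)" "\<And>z. z \<in> topspace Z \<Longrightarrow> h (a' z) = b' (h z)"
    and z: "z \<in> topspace Z" and dense: "Z closure_of two_sided_orbit a a' z = topspace Z"
  shows "W closure_of two_sided_orbit b b' (h z) = topspace W"
proof -
  have "topspace W = h ` (Z closure_of two_sided_orbit a a' z)"
    using dense surj by simp
  also have "\<dots> \<subseteq> W closure_of (h ` two_sided_orbit a a' z)"
    using cont by (rule continuous_map_image_closure_subset)
  also have "\<dots> = W closure_of two_sided_orbit b b' (h z)"
    using two_sided_orbit_semiconj[OF assms(3-7)] by simp
  finally show ?thesis
    using closure_of_subset_topspace by (rule antisym[rotated])
qed

lemma dense_orbit_of_dense_Fn_orbit:
  assumes "n \<ge> 1"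
    and dense: "Fn_top n X closure_of two_sided_orbit (Fn_map f) (Fn_map g) A = Fn_set n X"
    and "a \<in> A"
  shows "X closure_of two_sided_orbit f g a = topspace X"
  unfolding dense_intersects_open
proof (intro allI impI)
  fix U
  assume U: "openin X U \<and> U \<noteq> {}"
  then obtain u where "u \<in> U" "u \<in> topspace X"
    using openin_subset by blast
  then have "{u} \<in> {B \<in> Fn_set n X. B \<subseteq> U}"
    using singleton_in_Fn_set[OF \<open>n \<ge> 1\<close>] by simp
  moreover have "openin (Fn_top n X) {B \<in> Fn_set n X. B \<subseteq> U}"
    using U by (intro openin_Fn_top_subset) simp
  moreover from dense have "Fn_top n X closure_of two_sided_orbit (Fn_map f) (Fn_map g) A
                              = topspace (Fn_top n X)"
    by simp
  ultimately have "two_sided_orbit (Fn_map f) (Fn_map g) A \<inter> {B \<in> Fn_set n X. B \<subseteq> U} \<noteq> {}"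
    unfolding dense_intersects_open by blast
  then obtain k where "(f ^^ k) ` A \<subseteq> U \<or> (g ^^ k) ` A \<subseteq> U"
    by (auto simp: two_sided_orbit_def funpow_Fn_map)
  with \<open>a \<in> A\<close> show "two_sided_orbit f g a \<inter> U \<noteq> {}"
    by (auto simp: two_sided_orbit_def)
qed

lemma dense_SFn_orbit_of_dense_Fn_orbit:
  assumes f: "f \<in> topspace X \<rightarrow> topspace X" and g: "g \<in> topspace X \<rightarrow> topspace X"
    and A: "A \<in> Fn_set n X"
    and dense: "Fn_top n X closure_of two_sided_orbit (Fn_map f) (Fn_map g) A = Fn_set n X"
  shows "SFn_top n X closure_of two_sided_orbit (SFn_map X f) (SFn_map X g) (q_map X A)
           = topspace (SFn_top n X)"
proof (rule dense_two_sided_orbit_image[where h = "q_map X" and z = A])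
  show "continuous_map (Fn_top n X) (SFn_top n X) (q_map X)"
    "q_map X ` topspace (Fn_top n X) = topspace (SFn_top n X)"
    using quotient_map_q_map by (auto intro: quotient_imp_continuous_map quotient_imp_surjective_map)
  show "Fn_map f \<in> topspace (Fn_top n X) \<rightarrow> topspace (Fn_top n X)"
    "Fn_map g \<in> topspace (Fn_top n X) \<rightarrow> topspace (Fn_top n X)"
    using Fn_map_in_Fn_set[OF f] Fn_map_in_Fn_set[OF g] by auto
  show "q_map X (Fn_map f B) = SFn_map X f (q_map X B)"
    "q_map X (Fn_map g B) = SFn_map X g (q_map X B)" if "B \<in> topspace (Fn_top n X)" for B
    by (simp_all add: SFn_map_q_map[OF f] SFn_map_q_map[OF g])
qed (use A dense in simp_all)

lemma openin_SFn_top_q_image_non_singletons: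
  assumes "Hausdorff_space X" and G: "openin (Fn_top n X) G"
  shows "openin (SFn_top n X) (q_map X ` (G - F1_set X))"
proof -
  have "openin (Fn_top n X) (G \<inter> (Fn_set n X - F1_set X))"
    using G openin_Fn_top_non_singletons[OF assms(1)] by (rule openin_Int)
  moreover have "G \<inter> (Fn_set n X - F1_set X) = G - F1_set X"
    using openin_subset[OF G] by auto
  ultimately show ?thesis
    by (intro openin_SFn_top_q_image) auto
qed

lemma F1_set_not_dense_two_sided_orbit:
  assumes "Hausdorff_space X" and "\<forall>x \<in> topspace X. \<not> openin X {x}" and "n \<ge> 2"
    and "topspace X \<noteq> {}"
  shows "SFn_top n X closure_of two_sided_orbit (SFn_map X f) (SFn_map X g) (F1_set X)
           \<noteq> topspace (SFn_top n X)"
proof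
  assume dense: "SFn_top n X closure_of two_sided_orbit (SFn_map X f) (SFn_map X g) (F1_set X)
                   = topspace (SFn_top n X)"
  have "two_sided_orbit (SFn_map X f) (SFn_map X g) (F1_set X) = {F1_set X}"
    by (intro two_sided_orbit_fixed_point) (simp_all add: SFn_map_def)
  moreover have "openin (SFn_top n X) (q_map X ` (Fn_set n X - F1_set X))"
    using openin_SFn_top_q_image_non_singletons[OF assms(1) openin_topspace] by simp
  moreover have "Fn_set n X - F1_set X \<noteq> {}"
  proof (rule openin_Fn_top_meets_non_singletons)
    obtain x where "x \<in> topspace X"
      using assms(4) by blast
    with \<open>n \<ge> 2\<close> show "Fn_set n X \<noteq> {}"
      using singleton_in_Fn_set[of n x X] by auto
  qed (use assms openin_topspace[of "Fn_top n X"] in simp_all)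
  ultimately have "F1_set X \<in> q_map X ` (Fn_set n X - F1_set X)"
    using dense unfolding dense_intersects_open by blast
  then obtain B where "B \<notin> F1_set X" "q_map X B = F1_set X"
    by auto
  then show False
    by (simp add: q_map_eq_F1_iff)
qed

lemma dense_Fn_orbit_of_dense_SFn_orbit:
  assumes Haus: "Hausdorff_space X" and perfect: "\<forall>x \<in> topspace X. \<not> openin X {x}" and "n \<ge> 2"
    and f: "f \<in> topspace X \<rightarrow> topspace X" and g: "g \<in> topspace X \<rightarrow> topspace X"
    and c: "c \<in> topspace (SFn_top n X)"
    and dense: "SFn_top n X closure_of two_sided_orbit (SFn_map X f) (SFn_map X g) c
                  = topspace (SFn_top n X)"
  shows "\<exists>A \<in> Fn_set n X. Fn_top n X closure_of two_sided_orbit (Fn_map f) (Fn_map g) A = Fn_set n X"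
proof -
  obtain A where A: "A \<in> Fn_set n X" "c = q_map X A"
    using c by auto
  then have "topspace X \<noteq> {}"
    by (auto simp: Fn_set_def)
  with A dense F1_set_not_dense_two_sided_orbit[OF Haus perfect \<open>n \<ge> 2\<close>] have "A \<notin> F1_set X"
    by (auto simp: q_map_eq_F1_iff[symmetric])
  have orbit: "two_sided_orbit (SFn_map X f) (SFn_map X g) c
                 = q_map X ` two_sided_orbit (Fn_map f) (Fn_map g) A"
    unfolding A(2)
    by (rule two_sided_orbit_semiconj[where S = "Fn_set n X" and h = "q_map X" and z = A])
      (use Fn_map_in_Fn_set[OF f] Fn_map_in_Fn_set[OF g] A(1) in
        \<open>auto simp: SFn_map_q_map[OF f] SFn_map_q_map[OF g]\<close>)
  have "Fn_top n X closure_of two_sided_orbit (Fn_map f) (Fn_map g) A = topspace (Fn_top n X)"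
    unfolding dense_intersects_open
  proof (intro allI impI)
    fix G
    assume G: "openin (Fn_top n X) G \<and> G \<noteq> {}"
    \<comment> \<open>q is injective off F1, so meeting q(G - F1) downstairs means meeting G upstairs\<close>
    have "openin (SFn_top n X) (q_map X ` (G - F1_set X))"
      using Haus G by (intro openin_SFn_top_q_image_non_singletons) auto
    moreover have "q_map X ` (G - F1_set X) \<noteq> {}"
      using perfect \<open>n \<ge> 2\<close> G openin_Fn_top_meets_non_singletons by blast
    ultimately have "q_map X ` two_sided_orbit (Fn_map f) (Fn_map g) A \<inter> q_map X ` (G - F1_set X) \<noteq> {}"
      using dense unfolding orbit dense_intersects_open by blast
    then obtain B D where "B \<in> two_sided_orbit (Fn_map f) (Fn_map g) A" "D \<in> G - F1_set X"
      "q_map X B = q_map X D"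
      by blast
    moreover from this(2,3) have "B = D"
      by (simp add: q_map_eq_iff)
    ultimately show "two_sided_orbit (Fn_map f) (Fn_map g) A \<inter> G \<noteq> {}"
      by blast
  qed
  with A(1) show ?thesis
    by auto
qed

lemma two_sided_transitive_of_Fn_map:
  assumes "n \<ge> 1" and "homeomorphic_map X X f"
    and "two_sided_transitive (Fn_top n X) (Fn_map f)"
  shows "two_sided_transitive X f"
proof -
  obtain g where fg: "homeomorphic_maps X X f g"
    using assms(2) by (auto simp: homeomorphic_map_maps)
  obtain A where A: "A \<in> Fn_set n X"
    "Fn_top n X closure_of two_sided_orbit (Fn_map f) (Fn_map g) A = Fn_set n X"
    using assms(3) two_sided_transitive_iff_dense_orbit[OF homeomorphic_maps_Fn_map[OF fg]] by auto
  then obtain a where "a \<in> A" "a \<in> topspace X"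
    by (auto simp: Fn_set_def)
  moreover have "X closure_of two_sided_orbit f g a = topspace X"
    using assms(1) A(2) \<open>a \<in> A\<close> by (rule dense_orbit_of_dense_Fn_orbit)
  ultimately show ?thesis
    unfolding two_sided_transitive_iff_dense_orbit[OF fg] by blast
qed

lemma two_sided_transitive_SFn_map_iff:
  assumes "Hausdorff_space X" and "\<forall>x \<in> topspace X. \<not> openin X {x}" and "n \<ge> 2"
    and "homeomorphic_map X X f"
  shows "two_sided_transitive (SFn_top n X) (SFn_map X f) \<longleftrightarrow>
           two_sided_transitive (Fn_top n X) (Fn_map f)"
proof -
  obtain g where fg: "homeomorphic_maps X X f g"
    using assms(4) by (auto simp: homeomorphic_map_maps)
  then have f: "f \<in> topspace X \<rightarrow> topspace X" and g: "g \<in> topspace X \<rightarrow> topspace X"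
    by (auto simp: homeomorphic_maps_def continuous_map_def)
  show ?thesis
    unfolding two_sided_transitive_iff_dense_orbit[OF homeomorphic_maps_SFn_map[OF fg]]
      two_sided_transitive_iff_dense_orbit[OF homeomorphic_maps_Fn_map[OF fg]] topspace_Fn_top
  proof
    assume "\<exists>c \<in> topspace (SFn_top n X).
      SFn_top n X closure_of two_sided_orbit (SFn_map X f) (SFn_map X g) c = topspace (SFn_top n X)"
    then show "\<exists>A \<in> Fn_set n X.
      Fn_top n X closure_of two_sided_orbit (Fn_map f) (Fn_map g) A = Fn_set n X"
      using dense_Fn_orbit_of_dense_SFn_orbit[OF assms(1-3) f g] by blast
  next
    assume "\<exists>A \<in> Fn_set n X.
      Fn_top n X closure_of two_sided_orbit (Fn_map f) (Fn_map g) A = Fn_set n X"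
    then obtain A where "A \<in> Fn_set n X"
      "Fn_top n X closure_of two_sided_orbit (Fn_map f) (Fn_map g) A = Fn_set n X"
      by blast
    then show "\<exists>c \<in> topspace (SFn_top n X).
      SFn_top n X closure_of two_sided_orbit (SFn_map X f) (SFn_map X g) c = topspace (SFn_top n X)"
      by (intro bexI[of _ "q_map X A"] dense_SFn_orbit_of_dense_Fn_orbit[OF f g]) simp_all
  qed
qed

theorem theorem22:
  fixes X :: "'a topology" and n :: nat and f :: "'a \<Rightarrow> 'a"
  assumes "compactum X" and "n \<ge> 2" and "f \<in> topspace X \<rightarrow> topspace X"
  shows "(two_sided_transitive (Fn_top n X) (Fn_map f)
            \<longleftrightarrow> two_sided_transitive (SFn_top n X) (SFn_map X f))
       \<and> (two_sided_transitive (Fn_top n X) (Fn_map f) \<longrightarrow> two_sided_transitive X f)"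
proof -
  have X: "compact_space X" "Hausdorff_space X" "\<forall>x \<in> topspace X. \<not> openin X {x}"
    using assms(1) by (auto simp: compactum_def)
  have "n \<ge> 1"
    using assms(2) by simp
  show ?thesis
  proof (cases "homeomorphic_map X X f")
    case True
    then show ?thesis
      using two_sided_transitive_SFn_map_iff[OF X(2,3) assms(2)]
        two_sided_transitive_of_Fn_map[OF \<open>n \<ge> 1\<close>] by blast
  next
    case False
    then have "\<not> homeomorphic_map (Fn_top n X) (Fn_top n X) (Fn_map f)"
      "\<not> homeomorphic_map (SFn_top n X) (SFn_top n X) (SFn_map X f)"
      using homeomorphic_map_of_Fn_map[OF X(1,2) \<open>n \<ge> 1\<close> assms(3)]
        homeomorphic_map_of_SFn_map[OF X(1,2) assms(2,3)] by blast+
    then show ?thesis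
      by (simp add: two_sided_transitive_def)
  qed
qed

end
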